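(* Let $n\ge 2$, $h=1/n$, and for $0\le i\le n$ let $\tau_i=-2\sin\frac{i\pi}{2n}$ and $\sigma_i=2\big(2+\cos\frac{i\pi}{n}\big)$. Let $A,D\in\mathbb{R}^{(n-1)\times(n-1)}$ be the tridiagonal matrices with $A_{k,k}=2$, $A_{k,k\pm1}=-1$ and $D_{k,k}=4$, $D_{k,k\pm1}=1$ (other entries zero), and let $B\in\mathbb{R}^{(n-1)\times n}$ have entries $B_{k,k}=-1$, $B_{k,k+1}=1$ ($1\le k\le n-1$), other entries zero. For $0\le j\le n-1$ let $\bm s_j=\big(\sin\frac{j\pi}{n},\dots,\sin\frac{(n-1)j\pi}{n}\big)^{\mathsf T}\in\mathbb{R}^{n-1}$ (so $\bm s_0=\bm 0$) and $\bm c_j=\nu_j\big(\cos\frac{j\pi}{2n},\cos\frac{3j\pi}{2n},\dots,\cos\frac{(2n-1)j\pi}{2n}\big)^{\mathsf T}\in\mathbb{R}^{n}$, with $\nu_0=\frac1{\sqrt2}$ and $\nu_j=1$ for $j\ge1$. Consider the discrete eigenvalue problem: find $\lambda\in\mathbb{R}$ and $(U,V)\in\mathbb{R}^{n\times(n-1)}\times\mathbb{R}^{(n-1)\times n}$, $(U,V)\neq(0,0)$, with $$UA-B^{\mathsf T}VB^{\mathsf T}=\tfrac{h^2}{6}\lambda\,UD,\qquad -BUB+AV=\tfrac{h^2}{6}\lambda\,DV.$$ Then this problem has the following $2n(n-1)$ eigen-solutions, whose eigenvectors $(U,V)$ form a basis of $\mathbb{R}^{n\times(n-1)}\times\mathbb{R}^{(n-1)\times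 n}$ (a complete eigen-decomposition): (i) $n^2-1$ eigen-solutions satisfying the discrete divergence-free constraint $BUD+DVB^{\mathsf T}=0$: $$\lambda_{i,j}=\frac{6}{h^2}\Big(\frac{\tau_i^2}{\sigma_i}+\frac{\tau_j^2}{\sigma_j}\Big),\quad U_{i,j}=\tau_j\sigma_i\,\bm c_i\bm s_j^{\mathsf T},\quad V_{i,j}=-\tau_i\sigma_j\,\bm s_i\bm c_j^{\mathsf T},$$ for $0\le i,j\le n-1$, $(i,j)\neq(0,0)$; (ii) $(n-1)^2$ (discrete curl-free) eigen-solutions with eigenvalue $0$: $$\lambda=0,\quad U^0_{i,j}=\tau_i\,\bm c_i\bm s_j^{\mathsf T},\quad V^0_{i,j}=\tau_j\,\bm s_i\bm c_j^{\mathsf T},\qquad 1\le i,j\le n-1.$$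
   Context: This is the algebraic form of the lowest-order rectangular Nédélec edge-element discretization of the Maxwell eigenvalue problem $\mathrm{curl}\,\mathrm{rot}\,\bm u=\lambda\bm u$ on $[0,1]^2$ with $\bm u\times\bm n=0$ on the boundary, on a uniform $n\times n$ mesh. For column vectors $\bm a,\bm b$, $\bm a\bm b^{\mathsf T}$ denotes the outer product (written $\bm a\otimes\bm b^{\mathsf T}$ in the paper). *)

theory Defs
  imports Complex_Main "Jordan_Normal_Form.Matrix"
begin

(* All matrices/vectors are 0-indexed: paper index k (1-based) corresponds to k-1 here. *)

definition tau :: "nat \<Rightarrow> nat \<Rightarrow> real" where
  "tau n i = - 2 * sin (real i * pi / (2 * real n))"

definition sigma :: "nat \<Rightarrow> nat \<Rightarrow> real" where
  "sigma n i = 2 * (2 + cos (real i * pi / real n))"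

definition Amat :: "nat \<Rightarrow> real mat" where
  "Amat n = mat (n - 1) (n - 1) (\<lambda>(k, l). if k = l then 2 else if k = l + 1 \<or> l = k + 1 then -1 else 0)"

definition Dmat :: "nat \<Rightarrow> real mat" where
  "Dmat n = mat (n - 1) (n - 1) (\<lambda>(k, l). if k = l then 4 else if k = l + 1 \<or> l = k + 1 then 1 else 0)"

definition Bmat :: "nat \<Rightarrow> real mat" where
  "Bmat n = mat (n - 1) n (\<lambda>(k, l). if l = k then -1 else if l = k + 1 then 1 else 0)"

definition svec :: "nat \<Rightarrow> nat \<Rightarrow> real vec" where
  "svec n j = vec (n - 1) (\<lambda>k. sin (real (k + 1) * real j * pi / real n))"

definition nu :: "nat \<Rightarrow> real" where
  "nu j = (if j = 0 then 1 / sqrt 2 else 1)"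

definition cvec :: "nat \<Rightarrow> nat \<Rightarrow> real vec" where
  "cvec n j = vec n (\<lambda>k. nu j * cos (real (2 * k + 1) * real j * pi / (2 * real n)))"

definition outer :: "real vec \<Rightarrow> real vec \<Rightarrow> real mat" where
  "outer a b = mat (dim_vec a) (dim_vec b) (\<lambda>(r, c). a $ r * b $ c)"

definition is_eigsol :: "nat \<Rightarrow> real \<Rightarrow> real mat \<Rightarrow> real mat \<Rightarrow> bool" where
  "is_eigsol n lam U V \<longleftrightarrow>
     U \<in> carrier_mat n (n - 1) \<and> V \<in> carrier_mat (n - 1) n \<and>
     (U, V) \<noteq> (0\<^sub>m n (n - 1), 0\<^sub>m (n - 1) n) \<and>
     U * Amat n - (Bmat n)\<^sup>T * V * (Bmat n)\<^sup>T
        = ((1 / real n)^2 / 6 * lam) \<cdot>\<^sub>m (U * Dmat n) \<and>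
     - (Bmat n * U * Bmat n) + Amat n * V
        = ((1 / real n)^2 / 6 * lam) \<cdot>\<^sub>m (Dmat n * V)"

definition lam_div :: "nat \<Rightarrow> nat \<Rightarrow> nat \<Rightarrow> real" where
  "lam_div n i j = 6 / (1 / real n)^2 * ((tau n i)^2 / sigma n i + (tau n j)^2 / sigma n j)"

definition U_div :: "nat \<Rightarrow> nat \<Rightarrow> nat \<Rightarrow> real mat" where
  "U_div n i j = (tau n j * sigma n i) \<cdot>\<^sub>m outer (cvec n i) (svec n j)"

definition V_div :: "nat \<Rightarrow> nat \<Rightarrow> nat \<Rightarrow> real mat" where
  "V_div n i j = (- tau n i * sigma n j) \<cdot>\<^sub>m outer (svec n i) (cvec n j)"

definition U_curl :: "nat \<Rightarrow> nat \<Rightarrow> nat \<Rightarrow> real mat" where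
  "U_curl n i j = tau n i \<cdot>\<^sub>m outer (cvec n i) (svec n j)"

definition V_curl :: "nat \<Rightarrow> nat \<Rightarrow> nat \<Rightarrow> real mat" where
  "V_curl n i j = tau n j \<cdot>\<^sub>m outer (svec n i) (cvec n j)"

definition I_div :: "nat \<Rightarrow> (nat \<times> nat) set" where
  "I_div n = {(i, j). i \<le> n - 1 \<and> j \<le> n - 1 \<and> (i, j) \<noteq> (0, 0)}"

definition I_curl :: "nat \<Rightarrow> (nat \<times> nat) set" where
  "I_curl n = {(i, j). 1 \<le> i \<and> i \<le> n - 1 \<and> 1 \<le> j \<and> j \<le> n - 1}"

definition combU :: "nat \<Rightarrow> (nat \<times> nat \<Rightarrow> real) \<Rightarrow> (nat \<times> nat \<Rightarrow> real) \<Rightarrow> real mat" where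
  "combU n a b = mat n (n - 1) (\<lambda>rc.
     (\<Sum>p\<in>I_div n. a p * U_div n (fst p) (snd p) $$ rc)
   + (\<Sum>p\<in>I_curl n. b p * U_curl n (fst p) (snd p) $$ rc))"

definition combV :: "nat \<Rightarrow> (nat \<times> nat \<Rightarrow> real) \<Rightarrow> (nat \<times> nat \<Rightarrow> real) \<Rightarrow> real mat" where
  "combV n a b = mat (n - 1) n (\<lambda>rc.
     (\<Sum>p\<in>I_div n. a p * V_div n (fst p) (snd p) $$ rc)
   + (\<Sum>p\<in>I_curl n. b p * V_curl n (fst p) (snd p) $$ rc))"

end

theory Submission
  imports Defs
begin

text \<open>
  The sine vectors s_j and the cosine vectors c_i diagonalise every matrix of the problem:
  A s_j = tau_j^2 s_j, D s_j = sigma_j s_j, B c_j = tau_j s_j and B^T s_j = tau_j c_j,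
  since B is a first difference mapping the half-integer cosine grid onto the integer sine
  grid and A, D are three-point stencils. On a rank-one pair
  (alpha c_i s_j^T, beta s_i c_j^T) the two matrix equations therefore collapse to a 2x2
  generalised eigenproblem in (alpha, beta), whose two solutions are the divergence-free
  and the curl-free modes. For completeness, {c_i} and {s_j, j >= 1} are orthogonal bases
  (rows and columns) with squared norm n/2, so (X, Y) is a combination of the modes iff for
  every (i, j) the two weights solve a 2x2 system whose right-hand side consists of cosine and
  sine coefficients of X and Y; its determinant tau_j^2 sigma_i + tau_i^2 sigma_j is positive.
\<close>

section \<open>Trigonometric sums on the grid\<close>

lemma sum_cos_odd_multiples:
  "2 * sin y * (\<Sum>k<n. cos ((2 * real k + 1) * y)) = sin (2 * real n * y)"
proof (induction n)
  case (Suc n)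
  have "2 * sin y * cos ((2 * real n + 1) * y) = sin (2 * real (Suc n) * y) - sin (2 * real n * y)"
    using cos_times_sin[of "(2 * real n + 1) * y" y] by (simp add: algebra_simps)
  with Suc show ?case by (simp add: distrib_left)
qed simp

lemma sum_cos_even_multiples:
  "2 * sin y * (\<Sum>k<n. cos (2 * real k * y)) = sin ((2 * real n - 1) * y) + sin y"
proof (induction n)
  case (Suc n)
  have "2 * sin y * cos (2 * real n * y) = sin ((2 * real (Suc n) - 1) * y) - sin ((2 * real n - 1) * y)"
    using cos_times_sin[of "2 * real n * y" y] by (simp add: algebra_simps)
  with Suc show ?case by (simp add: distrib_left)
qed simp

lemma sin_int_mult_pi_div_neq_0:
  assumes "m \<noteq> 0" "\<bar>m\<bar> < 2 * int n"
  shows "sin (real_of_int m * pi / (2 * real n)) \<noteq> 0"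
proof
  have "real_of_int m * pi / (2 * real n) = real_of_int m / real_of_int (2 * int n) * pi"
    by simp
  moreover assume "sin (real_of_int m * pi / (2 * real n)) = 0"
  ultimately have "real_of_int m / real_of_int (2 * int n) \<in> \<int>"
    by (metis sin_times_pi_eq_0)
  then have "2 * int n dvd m"
    using of_int_div_of_int_in_Ints_iff[of m "2 * int n"] assms by auto
  then show False
    using assms dvd_imp_le_int[of m "2 * int n"] by simp
qed

lemma sum_cos_odd_grid:
  assumes "m \<noteq> 0" "\<bar>m\<bar> < 2 * int n"
  shows "(\<Sum>k<n. cos (real (2 * k + 1) * real_of_int m * pi / (2 * real n))) = 0"
proof -
  define y where "y = real_of_int m * pi / (2 * real n)"
  define S where "S = (\<Sum>k<n. cos ((2 * real k + 1) * y))"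
  have "n > 0" using assms by linarith
  have "(\<Sum>k<n. cos (real (2 * k + 1) * real_of_int m * pi / (2 * real n))) = S"
    by (simp add: S_def y_def mult.assoc add.commute)
  moreover have "sin y * (2 * S) = 0"
    using sum_cos_odd_multiples[of y n] \<open>n > 0\<close>
    by (simp add: S_def y_def sin_times_pi_eq_0 algebra_simps)
  moreover have "sin y \<noteq> 0"
    using sin_int_mult_pi_div_neq_0[OF assms] by (simp add: y_def)
  ultimately show ?thesis by simp
qed

lemma sum_cos_grid:
  assumes "m \<noteq> 0" "\<bar>m\<bar> < 2 * int n"
  shows "(\<Sum>k<n. cos (real k * real_of_int m * pi / real n)) = (if odd m then 1 else 0)"
proof -
  define y where "y = real_of_int m * pi / (2 * real n)"
  define S where "S = (\<Sum>k<n. cos (2 * real k * y))"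
  have "n > 0" using assms by linarith
  have "(\<Sum>k<n. cos (real k * real_of_int m * pi / real n)) = S"
    using \<open>n > 0\<close> by (simp add: S_def y_def mult.assoc)
  moreover have "(2 * real n - 1) * y = real_of_int m * pi - y"
    using \<open>n > 0\<close> by (simp add: y_def field_simps)
  then have "sin y * (2 * S) = sin y * (1 - cos (real_of_int m * pi))"
    using sum_cos_even_multiples[of y n]
    by (simp add: S_def sin_diff sin_times_pi_eq_0 algebra_simps)
  moreover have "sin y \<noteq> 0"
    using sin_int_mult_pi_div_neq_0[OF assms] by (simp add: y_def)
  moreover have "cos (real_of_int m * pi) = (if even m then 1 else -1)"
    using cos_npi_int[of m] by (simp add: mult.commute)
  ultimately show ?thesis by auto
qed

lemma sum_sin_sin_grid:
  assumes "1 \<le> a" "a < n" "1 \<le> b" "b < n"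
  shows "(\<Sum>k<n. sin (real k * real a * pi / real n) * sin (real k * real b * pi / real n))
       = (if a = b then real n / 2 else 0)"
proof -
  define S where "S m = (\<Sum>k<n. cos (real k * real_of_int m * pi / real n))" for m
  have prod_to_sum: "sin (real k * real a * pi / real n) * sin (real k * real b * pi / real n)
      = (cos (real k * real_of_int (int a - int b) * pi / real n)
         - cos (real k * real_of_int (int a + int b) * pi / real n)) / 2" for k
  proof -
    have "real k * real a * pi / real n - real k * real b * pi / real n
        = real k * real_of_int (int a - int b) * pi / real n"
     and "real k * real a * pi / real n + real k * real b * pi / real n
        = real k * real_of_int (int a + int b) * pi / real n"
      using assms by (simp_all add: field_simps)
    then show ?thesis by (simp only: sin_times_sin)
  qed
  have "(\<Sum>k<n. sin (real k * real a * pi / real n) * sin (real k * real b * pi / real n))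
      = (S (int a - int b) - S (int a + int b)) / 2"
    unfolding S_def sum_divide_distrib sum_subtractf[symmetric] prod_to_sum ..
  also have "\<dots> = (if a = b then real n / 2 else 0)"
  proof (cases "a = b")
    case True
    then show ?thesis
      using assms sum_cos_grid[of "int a + int b" n] by (simp add: S_def)
  next
    case False
    have "odd (int a - int b) \<longleftrightarrow> odd (int a + int b)" by presburger
    then show ?thesis
      using False assms sum_cos_grid[of "int a - int b" n] sum_cos_grid[of "int a + int b" n]
      by (simp add: S_def)
  qed
  finally show ?thesis .
qed

lemma sum_cos_cos_odd_grid:
  assumes "i < n" "i' < n"
  shows "(\<Sum>k<n. cos (real (2 * k + 1) * real i * pi / (2 * real n))
                 * cos (real (2 * k + 1) * real i' * pi / (2 * real n)))
       = (if i = i' then if i = 0 then real n else real n / 2 else 0)"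
proof -
  define T where "T m = (\<Sum>k<n. cos (real (2 * k + 1) * real_of_int m * pi / (2 * real n)))" for m
  have prod_to_sum: "cos (real (2 * k + 1) * real i * pi / (2 * real n)) * cos (real (2 * k + 1) * real i' * pi / (2 * real n))
      = (cos (real (2 * k + 1) * real_of_int (int i - int i') * pi / (2 * real n))
         + cos (real (2 * k + 1) * real_of_int (int i + int i') * pi / (2 * real n))) / 2" for k
  proof -
    have "real (2 * k + 1) * real i * pi / (2 * real n) - real (2 * k + 1) * real i' * pi / (2 * real n)
        = real (2 * k + 1) * real_of_int (int i - int i') * pi / (2 * real n)"
     and "real (2 * k + 1) * real i * pi / (2 * real n) + real (2 * k + 1) * real i' * pi / (2 * real n)
        = real (2 * k + 1) * real_of_int (int i + int i') * pi / (2 * real n)"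
      using assms by (simp_all add: field_simps)
    then show ?thesis by (simp only: cos_times_cos)
  qed
  have "(\<Sum>k<n. cos (real (2 * k + 1) * real i * pi / (2 * real n))
                 * cos (real (2 * k + 1) * real i' * pi / (2 * real n)))
      = (T (int i - int i') + T (int i + int i')) / 2"
    unfolding T_def sum_divide_distrib sum.distrib[symmetric] prod_to_sum ..
  also have "\<dots> = (if i = i' then if i = 0 then real n else real n / 2 else 0)"
  proof -
    have "T 0 = real n" by (simp add: T_def)
    moreover have "T (int i + int i') = 0" if "i \<noteq> 0 \<or> i' \<noteq> 0"
      unfolding T_def by (rule sum_cos_odd_grid) (use assms that in auto)
    moreover have "T (int i - int i') = 0" if "i \<noteq> i'"
      unfolding T_def by (rule sum_cos_odd_grid) (use assms that in auto)
    ultimately show ?thesis by auto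
  qed
  finally show ?thesis .
qed

lemma sum_cos_cos_grid:
  assumes "r < n" "r' < n"
  shows "(\<Sum>i<n. cos (real (2 * r + 1) * real i * pi / (2 * real n))
                 * cos (real (2 * r' + 1) * real i * pi / (2 * real n)))
       = (if r = r' then (real n + 1) / 2 else 1 / 2)"
proof -
  define S where "S m = (\<Sum>i<n. cos (real i * real_of_int m * pi / real n))" for m
  have prod_to_sum: "cos (real (2 * r + 1) * real i * pi / (2 * real n)) * cos (real (2 * r' + 1) * real i * pi / (2 * real n))
      = (cos (real i * real_of_int (int r - int r') * pi / real n)
         + cos (real i * real_of_int (int r + int r' + 1) * pi / real n)) / 2" for i
  proof -
    have "real (2 * r + 1) * real i * pi / (2 * real n) - real (2 * r' + 1) * real i * pi / (2 * real n)
        = real i * real_of_int (int r - int r') * pi / real n"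
     and "real (2 * r + 1) * real i * pi / (2 * real n) + real (2 * r' + 1) * real i * pi / (2 * real n)
        = real i * real_of_int (int r + int r' + 1) * pi / real n"
      using assms by (simp_all add: field_simps)
    then show ?thesis by (simp only: cos_times_cos)
  qed
  have "(\<Sum>i<n. cos (real (2 * r + 1) * real i * pi / (2 * real n))
                 * cos (real (2 * r' + 1) * real i * pi / (2 * real n)))
      = (S (int r - int r') + S (int r + int r' + 1)) / 2"
    unfolding S_def sum_divide_distrib sum.distrib[symmetric] prod_to_sum ..
  also have "\<dots> = (if r = r' then (real n + 1) / 2 else 1 / 2)"
  proof (cases "r = r'")
    case True
    then show ?thesis
      using assms sum_cos_grid[of "int r + int r' + 1" n] by (simp add: S_def)
  next
    case False
    have "odd (int r - int r') \<longleftrightarrow> even (int r + int r' + 1)" by presburger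
    then show ?thesis
      using False assms sum_cos_grid[of "int r - int r'" n] sum_cos_grid[of "int r + int r' + 1" n]
      by (auto simp: S_def)
  qed
  finally show ?thesis .
qed

section \<open>Orthogonality of the sine and cosine vectors\<close>

lemma svec_dim [simp]: "dim_vec (svec n j) = n - 1"
  by (simp add: svec_def)

lemma cvec_dim [simp]: "dim_vec (cvec n j) = n"
  by (simp add: cvec_def)

lemma svec_orthogonal:
  assumes "a \<in> {1..<n}" "b \<in> {1..<n}"
  shows "(\<Sum>c<n - 1. svec n a $ c * svec n b $ c) = (if a = b then real n / 2 else 0)"
proof -
  define f where "f k = sin (real k * real a * pi / real n) * sin (real k * real b * pi / real n)" for k
  have "(\<Sum>c<n - 1. svec n a $ c * svec n b $ c) = (\<Sum>c<n - 1. f (Suc c))"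
    by (simp add: svec_def f_def)
  also have "\<dots> = (\<Sum>k<n. f k)"
    using assms sum.lessThan_Suc_shift[of f "n - 1"] by (simp add: f_def)
  finally show ?thesis
    using assms sum_sin_sin_grid[of a n b] by (simp add: f_def)
qed

lemma svec_complete:
  assumes "c \<in> {..<n - 1}" "c' \<in> {..<n - 1}"
  shows "(\<Sum>j\<in>{1..<n}. svec n j $ c * svec n j $ c') = (if c = c' then real n / 2 else 0)"
proof -
  define f where "f k = sin (real k * real (Suc c) * pi / real n) * sin (real k * real (Suc c') * pi / real n)" for k
  have "(\<Sum>j\<in>{1..<n}. svec n j $ c * svec n j $ c') = (\<Sum>j\<in>{1..<n}. f j)"
    using assms by (intro sum.cong refl) (simp add: svec_def f_def mult_ac)
  also have "\<dots> = (\<Sum>k<n. f k)"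
  proof -
    have "{..<n} = insert 0 {1..<n}" using assms by auto
    then show ?thesis by (simp add: f_def)
  qed
  finally show ?thesis
    using sum_sin_sin_grid[of "Suc c" n "Suc c'"] assms by (simp add: f_def)
qed

lemma cvec_orthogonal:
  assumes "i \<in> {..<n}" "i' \<in> {..<n}"
  shows "(\<Sum>r<n. cvec n i $ r * cvec n i' $ r) = (if i = i' then real n / 2 else 0)"
proof -
  have "(\<Sum>r<n. cvec n i $ r * cvec n i' $ r)
      = nu i * nu i' * (\<Sum>r<n. cos (real (2 * r + 1) * real i * pi / (2 * real n))
                              * cos (real (2 * r + 1) * real i' * pi / (2 * real n)))"
    by (simp add: cvec_def sum_distrib_left mult_ac)
  then show ?thesis
    using assms sum_cos_cos_odd_grid[of i n i'] by (simp add: nu_def)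
qed

lemma cvec_complete:
  assumes "r \<in> {..<n}" "r' \<in> {..<n}"
  shows "(\<Sum>i<n. cvec n i $ r * cvec n i $ r') = (if r = r' then real n / 2 else 0)"
proof -
  define f where "f i = cos (real (2 * r + 1) * real i * pi / (2 * real n))
                      * cos (real (2 * r' + 1) * real i * pi / (2 * real n))" for i
  have "(\<Sum>i<n. cvec n i $ r * cvec n i $ r') = (\<Sum>i<n. f i - (if i = 0 then 1 / 2 else 0))"
    using assms by (intro sum.cong refl) (simp add: cvec_def f_def nu_def)
  also have "\<dots> = (\<Sum>i<n. f i) - 1 / 2"
    using assms by (simp add: sum_subtractf)
  also have "(\<Sum>i<n. f i) = (if r = r' then (real n + 1) / 2 else 1 / 2)"
    unfolding f_def by (rule sum_cos_cos_grid) (use assms in auto)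
  finally show ?thesis by (simp add: add_divide_distrib)
qed

section \<open>Eigenvector relations\<close>

lemma sum_delta_mult:
  assumes "finite A"
  shows "(\<Sum>l\<in>A. (if l = k then c else 0) * g l) = (if k \<in> A then c * g k else (0::'a::semiring_0))"
proof -
  have "(\<Sum>l\<in>A. (if l = k then c else 0) * g l) = (\<Sum>l\<in>A. if l = k then c * g k else 0)"
    by (intro sum.cong) auto
  then show ?thesis using assms by simp
qed

lemma sum_tridiagonal_row:
  fixes a b :: "'a::semiring_0" and N :: nat
  assumes "k < N" "f 0 = 0" "f (N + 1) = 0"
  shows "(\<Sum>l<N. (if k = l then a else if k = l + 1 \<or> l = k + 1 then b else 0) * f (l + 1))
       = b * f k + a * f (k + 1) + b * f (k + 2)"
proof -
  have "(\<Sum>l<N. (if l = k then a else 0) * f (l + 1)) = a * f (k + 1)"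
    using assms by (simp add: sum_delta_mult)
  moreover have "(\<Sum>l<N. (if l + 1 = k then b else 0) * f (l + 1)) = b * f k"
  proof (cases k)
    case (Suc k')
    then have "(\<Sum>l<N. (if l + 1 = k then b else 0) * f (l + 1)) = (\<Sum>l<N. (if l = k' then b else 0) * f (l + 1))"
      by (intro sum.cong) auto
    then show ?thesis using Suc assms by (simp add: sum_delta_mult)
  qed (use assms in simp)
  moreover have "(\<Sum>l<N. (if l = k + 1 then b else 0) * f (l + 1)) = b * f (k + 2)"
  proof (cases "k + 1 < N")
    case False
    then have "k + 2 = N + 1" using assms by simp
    then show ?thesis using assms by (simp add: sum_delta_mult)
  qed (simp add: sum_delta_mult)
  moreover have "(if k = l then a else if k = l + 1 \<or> l = k + 1 then b else 0)
      = (if l = k then a else 0) + (if l + 1 = k then b else 0) + (if l = k + 1 then b else 0)" for l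
    by auto
  ultimately show ?thesis
    by (simp add: distrib_right sum.distrib add_ac)
qed

lemma sum_bidiagonal_row:
  fixes a b :: "'a::semiring_0" and N :: nat
  assumes "k + 1 < N"
  shows "(\<Sum>l<N. (if l = k then a else if l = k + 1 then b else 0) * g l) = a * g k + b * g (k + 1)"
proof -
  have "(if l = k then a else if l = k + 1 then b else 0) = (if l = k then a else 0) + (if l = k + 1 then b else 0)" for l
    by auto
  then show ?thesis
    using assms by (simp add: distrib_right sum.distrib sum_delta_mult)
qed

lemma sum_bidiagonal_column:
  fixes a b :: "'a::semiring_0" and N :: nat
  assumes "l \<le> N" "f 0 = 0" "f (N + 1) = 0"
  shows "(\<Sum>k<N. (if l = k then a else if l = k + 1 then b else 0) * f (k + 1)) = a * f (l + 1) + b * f l"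
proof -
  have "(\<Sum>k<N. (if k = l then a else 0) * f (k + 1)) = a * f (l + 1)"
    using assms by (cases "l < N") (auto simp: sum_delta_mult)
  moreover have "(\<Sum>k<N. (if k + 1 = l then b else 0) * f (k + 1)) = b * f l"
  proof (cases l)
    case (Suc l')
    then have "(\<Sum>k<N. (if k + 1 = l then b else 0) * f (k + 1)) = (\<Sum>k<N. (if k = l' then b else 0) * f (k + 1))"
      by (intro sum.cong) auto
    then show ?thesis using Suc assms by (simp add: sum_delta_mult)
  qed (use assms in simp)
  moreover have "(if l = k then a else if l = k + 1 then b else 0) = (if k = l then a else 0) + (if k + 1 = l then b else 0)" for k
    by auto
  ultimately show ?thesis
    by (simp add: distrib_right sum.distrib)
qed

lemma Amat_dim [simp]: "dim_row (Amat n) = n - 1" "dim_col (Amat n) = n - 1"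
  by (simp_all add: Amat_def)

lemma Dmat_dim [simp]: "dim_row (Dmat n) = n - 1" "dim_col (Dmat n) = n - 1"
  by (simp_all add: Dmat_def)

lemma Bmat_dim [simp]: "dim_row (Bmat n) = n - 1" "dim_col (Bmat n) = n"
  by (simp_all add: Bmat_def)

lemma tau_0 [simp]: "tau n 0 = 0"
  by (simp add: tau_def)

lemma tau_squared: "(tau n j)\<^sup>2 = 2 * (1 - cos (real j * pi / real n))"
  using cos_double_sin[of "real j * pi / (2 * real n)"] by (simp add: tau_def power_mult_distrib)

lemma nu_mult_tau: "nu j * tau n j = tau n j"
  by (simp add: nu_def tau_def)

lemma sin_mult_neighbours:
  "sin (real k * x) + sin (real (k + 2) * x) = 2 * cos x * sin (real (k + 1) * x)"
proof -
  have "(real k * x + real (k + 2) * x) / 2 = real (k + 1) * x"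
   and "(real k * x - real (k + 2) * x) / 2 = - x"
    by (simp_all add: algebra_simps)
  then show ?thesis by (simp add: sin_plus_sin)
qed

lemma Amat_mult_svec: "Amat n *\<^sub>v svec n j = (tau n j)\<^sup>2 \<cdot>\<^sub>v svec n j"
proof (rule eq_vecI)
  fix k assume "k < dim_vec ((tau n j)\<^sup>2 \<cdot>\<^sub>v svec n j)"
  then have k: "k < n - 1" by simp
  define x where "x = real j * pi / real n"
  define f where "f m = sin (real m * x)" for m
  have "(Amat n *\<^sub>v svec n j) $ k
      = (\<Sum>l<n - 1. (if k = l then 2 else if k = l + 1 \<or> l = k + 1 then -1 else 0) * f (l + 1))"
    using k by (simp add: Amat_def svec_def scalar_prod_def atLeast0LessThan f_def x_def mult.assoc)
  also have "\<dots> = - (f k + f (k + 2)) + 2 * f (k + 1)"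
    using sum_tridiagonal_row[of k "n - 1" f 2 "-1"] k
    by (simp add: f_def x_def sin_times_pi_eq_0 algebra_simps)
  also have "\<dots> = 2 * (1 - cos x) * f (k + 1)"
    using sin_mult_neighbours[of k x] by (simp add: f_def algebra_simps)
  also have "2 * (1 - cos x) = (tau n j)\<^sup>2"
    by (simp add: tau_squared x_def)
  finally show "(Amat n *\<^sub>v svec n j) $ k = ((tau n j)\<^sup>2 \<cdot>\<^sub>v svec n j) $ k"
    using k by (simp add: svec_def f_def x_def mult.assoc)
qed simp

lemma Dmat_mult_svec: "Dmat n *\<^sub>v svec n j = sigma n j \<cdot>\<^sub>v svec n j"
proof (rule eq_vecI)
  fix k assume "k < dim_vec (sigma n j \<cdot>\<^sub>v svec n j)"
  then have k: "k < n - 1" by simp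
  define x where "x = real j * pi / real n"
  define f where "f m = sin (real m * x)" for m
  have "(Dmat n *\<^sub>v svec n j) $ k
      = (\<Sum>l<n - 1. (if k = l then 4 else if k = l + 1 \<or> l = k + 1 then 1 else 0) * f (l + 1))"
    using k by (simp add: Dmat_def svec_def scalar_prod_def atLeast0LessThan f_def x_def mult.assoc)
  also have "\<dots> = (f k + f (k + 2)) + 4 * f (k + 1)"
    using sum_tridiagonal_row[of k "n - 1" f 4 1] k
    by (simp add: f_def x_def sin_times_pi_eq_0 algebra_simps)
  also have "\<dots> = 2 * (2 + cos x) * f (k + 1)"
    using sin_mult_neighbours[of k x] by (simp add: f_def algebra_simps)
  also have "2 * (2 + cos x) = sigma n j"
    by (simp add: sigma_def x_def)
  finally show "(Dmat n *\<^sub>v svec n j) $ k = (sigma n j \<cdot>\<^sub>v svec n j) $ k"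
    using k by (simp add: svec_def f_def x_def mult.assoc)
qed simp

lemma Bmat_mult_cvec: "Bmat n *\<^sub>v cvec n j = tau n j \<cdot>\<^sub>v svec n j"
proof (rule eq_vecI)
  fix k assume "k < dim_vec (tau n j \<cdot>\<^sub>v svec n j)"
  then have k: "k < n - 1" by simp
  define y where "y = real j * pi / (2 * real n)"
  have "(Bmat n *\<^sub>v cvec n j) $ k
      = (\<Sum>l<n. (if l = k then -1 else if l = k + 1 then 1 else 0) * cvec n j $ l)"
    using k by (simp add: Bmat_def scalar_prod_def atLeast0LessThan)
  also have "\<dots> = nu j * (cos (real (2 * k + 3) * y) - cos (real (2 * k + 1) * y))"
    using k sum_bidiagonal_row[of k n "-1" 1 "\<lambda>l. cvec n j $ l"]
    by (simp add: cvec_def y_def algebra_simps)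
  also have "\<dots> = nu j * tau n j * sin (real (k + 1) * (2 * y))"
  proof -
    have "(real (2 * k + 3) * y + real (2 * k + 1) * y) / 2 = real (k + 1) * (2 * y)"
     and "(real (2 * k + 1) * y - real (2 * k + 3) * y) / 2 = - y"
      by (simp_all add: algebra_simps)
    moreover have "tau n j = - 2 * sin y"
      by (simp add: tau_def y_def)
    ultimately show ?thesis by (simp only: cos_diff_cos) simp
  qed
  also have "\<dots> = (tau n j \<cdot>\<^sub>v svec n j) $ k"
    using k by (simp add: nu_mult_tau svec_def y_def mult.assoc)
  finally show "(Bmat n *\<^sub>v cvec n j) $ k = (tau n j \<cdot>\<^sub>v svec n j) $ k" .
qed simp

lemma Bmat_transpose_mult_svec: "(Bmat n)\<^sup>T *\<^sub>v svec n j = tau n j \<cdot>\<^sub>v cvec n j"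
proof (rule eq_vecI)
  fix l assume "l < dim_vec (tau n j \<cdot>\<^sub>v cvec n j)"
  then have l: "l < n" by simp
  define y where "y = real j * pi / (2 * real n)"
  define f where "f m = sin (real m * (2 * y))" for m
  have "((Bmat n)\<^sup>T *\<^sub>v svec n j) $ l
      = (\<Sum>k<n - 1. (if l = k then -1 else if l = k + 1 then 1 else 0) * f (k + 1))"
    using l by (simp add: Bmat_def svec_def scalar_prod_def atLeast0LessThan f_def y_def mult.assoc)
  also have "\<dots> = f l - f (l + 1)"
    using sum_bidiagonal_column[of l "n - 1" f "-1" 1] l
    by (simp add: f_def y_def sin_times_pi_eq_0)
  also have "\<dots> = tau n j * cos (real (2 * l + 1) * y)"
  proof -
    have "(real l * (2 * y) - real (l + 1) * (2 * y)) / 2 = - y"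
     and "(real l * (2 * y) + real (l + 1) * (2 * y)) / 2 = real (2 * l + 1) * y"
      by (simp_all add: algebra_simps)
    moreover have "tau n j = - 2 * sin y"
      by (simp add: tau_def y_def)
    ultimately show ?thesis by (simp only: f_def sin_diff_sin) simp
  qed
  also have "\<dots> = (tau n j \<cdot>\<^sub>v cvec n j) $ l"
    using l nu_mult_tau[of j n] by (auto simp: cvec_def y_def mult.assoc)
  finally show "((Bmat n)\<^sup>T *\<^sub>v svec n j) $ l = (tau n j \<cdot>\<^sub>v cvec n j) $ l" .
qed simp

section \<open>Rank-one modes\<close>

lemma Amat_symmetric: "(Amat n)\<^sup>T = Amat n"
  by (rule eq_matI) (auto simp: Amat_def)

lemma Dmat_symmetric: "(Dmat n)\<^sup>T = Dmat n"
  by (rule eq_matI) (auto simp: Dmat_def)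

lemma outer_carrier [simp]: "outer a b \<in> carrier_mat (dim_vec a) (dim_vec b)"
  by (simp add: outer_def)

lemma outer_dim [simp]: "dim_row (outer a b) = dim_vec a" "dim_col (outer a b) = dim_vec b"
  by (simp_all add: outer_def)

lemma index_outer [simp]: "r < dim_vec a \<Longrightarrow> c < dim_vec b \<Longrightarrow> outer a b $$ (r, c) = a $ r * b $ c"
  by (simp add: outer_def)

lemma outer_smult_left: "outer (x \<cdot>\<^sub>v a) b = x \<cdot>\<^sub>m outer a b"
  by (rule eq_matI) auto

lemma outer_smult_right: "outer a (x \<cdot>\<^sub>v b) = x \<cdot>\<^sub>m outer a b"
  by (rule eq_matI) auto

lemma mult_smult_outer:
  assumes "dim_col M = dim_vec a"
  shows "M * (x \<cdot>\<^sub>m outer a b) = x \<cdot>\<^sub>m outer (M *\<^sub>v a) b"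
proof (rule eq_matI)
  fix r c assume "r < dim_row (x \<cdot>\<^sub>m outer (M *\<^sub>v a) b)" "c < dim_col (x \<cdot>\<^sub>m outer (M *\<^sub>v a) b)"
  then have "r < dim_row M" "c < dim_vec b" by auto
  then show "(M * (x \<cdot>\<^sub>m outer a b)) $$ (r, c) = (x \<cdot>\<^sub>m outer (M *\<^sub>v a) b) $$ (r, c)"
    using assms by (simp add: scalar_prod_def sum_distrib_left sum_distrib_right mult_ac)
qed (use assms in auto)

lemma smult_outer_mult:
  assumes "dim_row M = dim_vec b"
  shows "(x \<cdot>\<^sub>m outer a b) * M = x \<cdot>\<^sub>m outer a (M\<^sup>T *\<^sub>v b)"
proof (rule eq_matI)
  fix r c assume "r < dim_row (x \<cdot>\<^sub>m outer a (M\<^sup>T *\<^sub>v b))" "c < dim_col (x \<cdot>\<^sub>m outer a (M\<^sup>T *\<^sub>v b))"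
  then have "r < dim_vec a" "c < dim_col M" by auto
  then show "((x \<cdot>\<^sub>m outer a b) * M) $$ (r, c) = (x \<cdot>\<^sub>m outer a (M\<^sup>T *\<^sub>v b)) $$ (r, c)"
    using assms by (simp add: scalar_prod_def sum_distrib_left mult_ac)
qed (use assms in auto)

lemma smult_smult_mat: "x \<cdot>\<^sub>m (y \<cdot>\<^sub>m A) = (x * y) \<cdot>\<^sub>m (A :: 'a::semigroup_mult mat)"
  by (rule eq_matI) (auto simp: mult.assoc)

lemma diff_smult_distrib_right_mat: "(x - y) \<cdot>\<^sub>m A = x \<cdot>\<^sub>m A - y \<cdot>\<^sub>m (A :: 'a::ring mat)"
  by (rule eq_matI) (auto simp: algebra_simps)

lemma uminus_add_smult_distrib_right_mat: "(y - x) \<cdot>\<^sub>m A = - (x \<cdot>\<^sub>m A) + y \<cdot>\<^sub>m (A :: 'a::ring mat)"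
  by (rule eq_matI) (auto simp: algebra_simps)

lemma zero_smult_mat: "0 \<cdot>\<^sub>m A = 0\<^sub>m (dim_row A) (dim_col (A :: 'a::mult_zero mat))"
  by (rule eq_matI) auto

lemma sigma_pos: "0 < sigma n i"
proof -
  have "0 < 2 + cos (real i * pi / real n)"
    using cos_ge_minus_one[of "real i * pi / real n"] by linarith
  then show ?thesis by (simp add: sigma_def)
qed

lemma tau_neq_0:
  assumes "0 < j" "j < 2 * n"
  shows "tau n j \<noteq> 0"
proof -
  have "0 < real j * pi / (2 * real n)" "real j * pi / (2 * real n) < pi"
    using assms by (simp_all add: divide_less_eq)
  then show ?thesis
    using sin_gt_zero by (fastforce simp: tau_def)
qed

lemma svec_first_neq_0:
  assumes "0 < j" "j < n"
  shows "svec n j $ 0 \<noteq> 0"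
proof -
  have "0 < real j * pi / real n" "real j * pi / real n < pi"
    using assms by (simp_all add: divide_less_eq)
  then show ?thesis
    using assms sin_gt_zero by (fastforce simp: svec_def)
qed

lemma cvec_first_neq_0:
  assumes "i < n"
  shows "cvec n i $ 0 \<noteq> 0"
proof -
  have "0 \<le> real i * pi / (2 * real n)"
    by simp
  then have "- (pi / 2) < real i * pi / (2 * real n)"
    using pi_gt_zero by linarith
  moreover have "real i * pi / (2 * real n) < pi / 2"
    using assms by (simp add: divide_less_eq)
  ultimately have "0 < cos (real i * pi / (2 * real n))"
    by (rule cos_gt_zero_pi)
  then show ?thesis
    using assms by (simp add: cvec_def nu_def)
qed

lemma modes_neq_zero:
  assumes "i < n" "j < n" "(\<alpha> \<noteq> 0 \<and> 0 < j) \<or> (\<beta> \<noteq> 0 \<and> 0 < i)"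
  shows "(\<alpha> \<cdot>\<^sub>m outer (cvec n i) (svec n j), \<beta> \<cdot>\<^sub>m outer (svec n i) (cvec n j))
           \<noteq> (0\<^sub>m n (n - 1), 0\<^sub>m (n - 1) n)"
proof (cases "\<alpha> \<noteq> 0 \<and> 0 < j")
  case True
  have "\<alpha> \<cdot>\<^sub>m outer (cvec n i) (svec n j) \<noteq> 0\<^sub>m n (n - 1)"
  proof
    assume "\<alpha> \<cdot>\<^sub>m outer (cvec n i) (svec n j) = 0\<^sub>m n (n - 1)"
    then have "(\<alpha> \<cdot>\<^sub>m outer (cvec n i) (svec n j)) $$ (0, 0) = 0"
      using True assms by simp
    then show False
      using True assms svec_first_neq_0 cvec_first_neq_0 by simp
  qed
  then show ?thesis by simp
next
  case False
  then have "\<beta> \<noteq> 0" "0 < i" using assms by auto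
  have "\<beta> \<cdot>\<^sub>m outer (svec n i) (cvec n j) \<noteq> 0\<^sub>m (n - 1) n"
  proof
    assume "\<beta> \<cdot>\<^sub>m outer (svec n i) (cvec n j) = 0\<^sub>m (n - 1) n"
    then have "(\<beta> \<cdot>\<^sub>m outer (svec n i) (cvec n j)) $$ (0, 0) = 0"
      using \<open>0 < i\<close> assms by simp
    then show False
      using \<open>\<beta> \<noteq> 0\<close> \<open>0 < i\<close> assms svec_first_neq_0 cvec_first_neq_0 by simp
  qed
  then show ?thesis by simp
qed

lemma is_eigsol_modes:
  assumes "i < n" "j < n"
    and eq_U: "\<alpha> * (tau n j)\<^sup>2 - \<beta> * (tau n i * tau n j) = \<mu> * (\<alpha> * sigma n j)"
    and eq_V: "\<beta> * (tau n i)\<^sup>2 - \<alpha> * (tau n i * tau n j) = \<mu> * (\<beta> * sigma n i)"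
    and "(\<alpha> \<noteq> 0 \<and> 0 < j) \<or> (\<beta> \<noteq> 0 \<and> 0 < i)"
  shows "is_eigsol n (6 * (real n)\<^sup>2 * \<mu>)
           (\<alpha> \<cdot>\<^sub>m outer (cvec n i) (svec n j)) (\<beta> \<cdot>\<^sub>m outer (svec n i) (cvec n j))"
proof -
  define U where "U = \<alpha> \<cdot>\<^sub>m outer (cvec n i) (svec n j)"
  define V where "V = \<beta> \<cdot>\<^sub>m outer (svec n i) (cvec n j)"
  have UA: "U * Amat n = (\<alpha> * (tau n j)\<^sup>2) \<cdot>\<^sub>m outer (cvec n i) (svec n j)"
    by (simp add: U_def smult_outer_mult Amat_symmetric Amat_mult_svec outer_smult_right smult_smult_mat)
  have UD: "U * Dmat n = (\<alpha> * sigma n j) \<cdot>\<^sub>m outer (cvec n i) (svec n j)"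
    by (simp add: U_def smult_outer_mult Dmat_symmetric Dmat_mult_svec outer_smult_right smult_smult_mat)
  have BVB: "(Bmat n)\<^sup>T * V * (Bmat n)\<^sup>T = (\<beta> * (tau n i * tau n j)) \<cdot>\<^sub>m outer (cvec n i) (svec n j)"
    by (simp add: V_def mult_smult_outer smult_outer_mult Bmat_transpose_mult_svec Bmat_mult_cvec
        outer_smult_left outer_smult_right smult_smult_mat mult_ac)
  have AV: "Amat n * V = (\<beta> * (tau n i)\<^sup>2) \<cdot>\<^sub>m outer (svec n i) (cvec n j)"
    by (simp add: V_def mult_smult_outer Amat_mult_svec outer_smult_left smult_smult_mat)
  have DV: "Dmat n * V = (\<beta> * sigma n i) \<cdot>\<^sub>m outer (svec n i) (cvec n j)"
    by (simp add: V_def mult_smult_outer Dmat_mult_svec outer_smult_left smult_smult_mat)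
  have BUB: "Bmat n * U * Bmat n = (\<alpha> * (tau n i * tau n j)) \<cdot>\<^sub>m outer (svec n i) (cvec n j)"
    by (simp add: U_def mult_smult_outer smult_outer_mult Bmat_transpose_mult_svec Bmat_mult_cvec
        outer_smult_left outer_smult_right smult_smult_mat mult_ac)
  have "(U, V) \<noteq> (0\<^sub>m n (n - 1), 0\<^sub>m (n - 1) n)"
    unfolding U_def V_def by (rule modes_neq_zero[OF assms(1,2,5)])
  moreover have "U * Amat n - (Bmat n)\<^sup>T * V * (Bmat n)\<^sup>T = \<mu> \<cdot>\<^sub>m (U * Dmat n)"
    unfolding UA BVB UD diff_smult_distrib_right_mat[symmetric] eq_U smult_smult_mat ..
  moreover have "- (Bmat n * U * Bmat n) + Amat n * V = \<mu> \<cdot>\<^sub>m (Dmat n * V)"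
    unfolding BUB AV DV uminus_add_smult_distrib_right_mat[symmetric] eq_V smult_smult_mat ..
  moreover have "U \<in> carrier_mat n (n - 1)" "V \<in> carrier_mat (n - 1) n"
    using outer_carrier[of "cvec n i" "svec n j"] outer_carrier[of "svec n i" "cvec n j"]
    by (simp_all add: U_def V_def)
  moreover have "(1 / real n)\<^sup>2 / 6 * (6 * (real n)\<^sup>2 * \<mu>) = \<mu>"
    using assms by (simp add: field_simps)
  ultimately show ?thesis
    unfolding is_eigsol_def U_def[symmetric] V_def[symmetric] by auto
qed

lemma modes_div_free:
  assumes "\<alpha> * (tau n i * sigma n j) + \<beta> * (sigma n i * tau n j) = 0"
  shows "Bmat n * (\<alpha> \<cdot>\<^sub>m outer (cvec n i) (svec n j)) * Dmat n
           + Dmat n * (\<beta> \<cdot>\<^sub>m outer (svec n i) (cvec n j)) * (Bmat n)\<^sup>T = 0\<^sub>m (n - 1) (n - 1)"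
proof -
  have "Bmat n * (\<alpha> \<cdot>\<^sub>m outer (cvec n i) (svec n j)) * Dmat n
      = (\<alpha> * (tau n i * sigma n j)) \<cdot>\<^sub>m outer (svec n i) (svec n j)"
    by (simp add: mult_smult_outer smult_outer_mult Bmat_mult_cvec Dmat_symmetric Dmat_mult_svec
        outer_smult_left outer_smult_right smult_smult_mat mult_ac)
  moreover have "Dmat n * (\<beta> \<cdot>\<^sub>m outer (svec n i) (cvec n j)) * (Bmat n)\<^sup>T
      = (\<beta> * (sigma n i * tau n j)) \<cdot>\<^sub>m outer (svec n i) (svec n j)"
    by (simp add: mult_smult_outer smult_outer_mult Bmat_mult_cvec Dmat_mult_svec
        outer_smult_left outer_smult_right smult_smult_mat mult_ac)
  ultimately show ?thesis
    using assms add_smult_distrib_right_mat[OF outer_carrier, symmetric] by (simp add: zero_smult_mat)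
qed

lemma div_mode_is_eigsol:
  assumes "(i, j) \<in> I_div n"
  shows "is_eigsol n (lam_div n i j) (U_div n i j) (V_div n i j)"
proof -
  from assms have ij: "i < n" "j < n" "0 < i \<or> 0 < j"
    by (auto simp: I_div_def)
  define \<mu> where "\<mu> = (tau n i)\<^sup>2 / sigma n i + (tau n j)\<^sup>2 / sigma n j"
  have \<sigma>: "sigma n i \<noteq> 0" "sigma n j \<noteq> 0"
    using sigma_pos[of n i] sigma_pos[of n j] by simp_all
  have "is_eigsol n (6 * (real n)\<^sup>2 * \<mu>)
      ((tau n j * sigma n i) \<cdot>\<^sub>m outer (cvec n i) (svec n j)) ((- tau n i * sigma n j) \<cdot>\<^sub>m outer (svec n i) (cvec n j))"
  proof (rule is_eigsol_modes)
    show "tau n j * sigma n i * (tau n j)\<^sup>2 - - tau n i * sigma n j * (tau n i * tau n j)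
        = \<mu> * (tau n j * sigma n i * sigma n j)"
     and "- tau n i * sigma n j * (tau n i)\<^sup>2 - tau n j * sigma n i * (tau n i * tau n j)
        = \<mu> * (- tau n i * sigma n j * sigma n i)"
      using \<sigma> by (simp_all add: \<mu>_def field_simps power2_eq_square)
    show "tau n j * sigma n i \<noteq> 0 \<and> 0 < j \<or> - tau n i * sigma n j \<noteq> 0 \<and> 0 < i"
      using ij \<sigma> tau_neq_0[of j n] tau_neq_0[of i n] by auto
  qed (use ij in auto)
  moreover have "lam_div n i j = 6 * (real n)\<^sup>2 * \<mu>"
    by (simp add: lam_div_def \<mu>_def power_one_over field_simps)
  ultimately show ?thesis
    by (simp add: U_div_def V_div_def)
qed

lemma div_mode_div_free:
  "Bmat n * U_div n i j * Dmat n + Dmat n * V_div n i j * (Bmat n)\<^sup>T = 0\<^sub>m (n - 1) (n - 1)"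
  unfolding U_div_def V_div_def by (rule modes_div_free) (simp add: algebra_simps)

lemma curl_mode_is_eigsol:
  assumes "(i, j) \<in> I_curl n"
  shows "is_eigsol n 0 (U_curl n i j) (V_curl n i j)"
proof -
  from assms have ij: "0 < i" "i < n" "0 < j" "j < n"
    by (auto simp: I_curl_def)
  have "is_eigsol n (6 * (real n)\<^sup>2 * 0) (tau n i \<cdot>\<^sub>m outer (cvec n i) (svec n j)) (tau n j \<cdot>\<^sub>m outer (svec n i) (cvec n j))"
    by (rule is_eigsol_modes) (use ij tau_neq_0[of j n] in \<open>simp_all add: power2_eq_square\<close>)
  then show ?thesis
    by (simp add: U_curl_def V_curl_def)
qed

section \<open>Completeness\<close>

lemma tensor_coeff:
  fixes u :: "'i \<Rightarrow> 'r \<Rightarrow> real" and v :: "'j \<Rightarrow> 'c \<Rightarrow> real"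
  assumes "finite I" "finite J" "finite R" "finite C"
    and u: "\<And>i i'. i \<in> I \<Longrightarrow> i' \<in> I \<Longrightarrow> (\<Sum>r\<in>R. u i r * u i' r) = (if i = i' then ka else 0)"
    and v: "\<And>j j'. j \<in> J \<Longrightarrow> j' \<in> J \<Longrightarrow> (\<Sum>c\<in>C. v j c * v j' c) = (if j = j' then kb else 0)"
    and "i\<^sub>0 \<in> I" "j\<^sub>0 \<in> J"
  shows "(\<Sum>r\<in>R. \<Sum>c\<in>C. (\<Sum>(i, j)\<in>I \<times> J. x (i, j) * (u i r * v j c)) * (u i\<^sub>0 r * v j\<^sub>0 c))
       = ka * kb * x (i\<^sub>0, j\<^sub>0)"
proof -
  have "(\<Sum>r\<in>R. \<Sum>c\<in>C. (\<Sum>(i, j)\<in>I \<times> J. x (i, j) * (u i r * v j c)) * (u i\<^sub>0 r * v j\<^sub>0 c))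
      = (\<Sum>r\<in>R. \<Sum>c\<in>C. \<Sum>p\<in>I \<times> J. x p * (u (fst p) r * u i\<^sub>0 r) * (v (snd p) c * v j\<^sub>0 c))"
    by (simp add: sum_distrib_left sum_distrib_right split_def mult_ac)
  also have "\<dots> = (\<Sum>r\<in>R. \<Sum>p\<in>I \<times> J. \<Sum>c\<in>C. x p * (u (fst p) r * u i\<^sub>0 r) * (v (snd p) c * v j\<^sub>0 c))"
    by (intro sum.cong refl) (rule sum.swap)
  also have "\<dots> = (\<Sum>p\<in>I \<times> J. \<Sum>r\<in>R. \<Sum>c\<in>C. x p * (u (fst p) r * u i\<^sub>0 r) * (v (snd p) c * v j\<^sub>0 c))"
    by (rule sum.swap)
  also have "\<dots> = (\<Sum>p\<in>I \<times> J. x p * (\<Sum>r\<in>R. u (fst p) r * u i\<^sub>0 r) * (\<Sum>c\<in>C. v (snd p) c * v j\<^sub>0 c))"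
    by (intro sum.cong refl) (simp add: sum_product sum_distrib_left mult_ac)
  also have "\<dots> = (\<Sum>p\<in>I \<times> J. (if fst p = i\<^sub>0 then ka else 0) * ((if snd p = j\<^sub>0 then kb else 0) * x p))"
    by (intro sum.cong refl) (auto simp: u v assms)
  also have "\<dots> = (\<Sum>i\<in>I. (if i = i\<^sub>0 then ka else 0) * (\<Sum>j\<in>J. (if j = j\<^sub>0 then kb else 0) * x (i, j)))"
    by (simp add: sum.cartesian_product' sum_distrib_left)
  also have "\<dots> = ka * (kb * x (i\<^sub>0, j\<^sub>0))"
    using assms by (simp add: sum_delta_mult)
  finally show ?thesis by (simp only: mult.assoc)
qed

lemma tensor_expansion:
  fixes u :: "'i \<Rightarrow> 'r \<Rightarrow> real" and v :: "'j \<Rightarrow> 'c \<Rightarrow> real"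
  assumes "finite I" "finite J" "finite R" "finite C"
    and u: "\<And>r r'. r \<in> R \<Longrightarrow> r' \<in> R \<Longrightarrow> (\<Sum>i\<in>I. u i r * u i r') = (if r = r' then ka else 0)"
    and v: "\<And>c c'. c \<in> C \<Longrightarrow> c' \<in> C \<Longrightarrow> (\<Sum>j\<in>J. v j c * v j c') = (if c = c' then kb else 0)"
    and "r\<^sub>0 \<in> R" "c\<^sub>0 \<in> C"
  shows "(\<Sum>(i, j)\<in>I \<times> J. (\<Sum>r\<in>R. \<Sum>c\<in>C. X r c * (u i r * v j c)) * (u i r\<^sub>0 * v j c\<^sub>0))
       = ka * kb * X r\<^sub>0 c\<^sub>0"
proof -
  have "(\<Sum>(i, j)\<in>I \<times> J. (\<Sum>r\<in>R. \<Sum>c\<in>C. X r c * (u i r * v j c)) * (u i r\<^sub>0 * v j c\<^sub>0))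
      = (\<Sum>p\<in>I \<times> J. \<Sum>r\<in>R. \<Sum>c\<in>C. X r c * (u (fst p) r * u (fst p) r\<^sub>0) * (v (snd p) c * v (snd p) c\<^sub>0))"
    by (simp add: sum_distrib_left sum_distrib_right split_def mult_ac)
  also have "\<dots> = (\<Sum>r\<in>R. \<Sum>p\<in>I \<times> J. \<Sum>c\<in>C. X r c * (u (fst p) r * u (fst p) r\<^sub>0) * (v (snd p) c * v (snd p) c\<^sub>0))"
    by (rule sum.swap)
  also have "\<dots> = (\<Sum>r\<in>R. \<Sum>c\<in>C. \<Sum>p\<in>I \<times> J. X r c * (u (fst p) r * u (fst p) r\<^sub>0) * (v (snd p) c * v (snd p) c\<^sub>0))"
    by (intro sum.cong refl) (rule sum.swap)
  also have "\<dots> = (\<Sum>r\<in>R. \<Sum>c\<in>C. X r c * (\<Sum>i\<in>I. u i r * u i r\<^sub>0) * (\<Sum>j\<in>J. v j c * v j c\<^sub>0))"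
    by (intro sum.cong refl) (simp add: sum.cartesian_product' sum_product sum_distrib_left mult_ac)
  also have "\<dots> = (\<Sum>r\<in>R. \<Sum>c\<in>C. (if r = r\<^sub>0 then ka else 0) * ((if c = c\<^sub>0 then kb else 0) * X r c))"
    by (intro sum.cong refl) (auto simp: u v assms)
  also have "\<dots> = (\<Sum>r\<in>R. (if r = r\<^sub>0 then ka else 0) * (\<Sum>c\<in>C. (if c = c\<^sub>0 then kb else 0) * X r c))"
    by (simp add: sum_distrib_left)
  also have "\<dots> = ka * (kb * X r\<^sub>0 c\<^sub>0)"
    using assms by (simp add: sum_delta_mult)
  finally show ?thesis by (simp only: mult.assoc)
qed

lemma tau_neq_0_imp_ge_1: "tau n k \<noteq> 0 \<Longrightarrow> 1 \<le> k"
  by (cases k) auto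

lemma I_div_eq: "0 < n \<Longrightarrow> I_div n = {..<n} \<times> {..<n} - {(0, 0)}"
  by (auto simp: I_div_def)

lemma I_curl_eq: "I_curl n = {1..<n} \<times> {1..<n}"
  by (auto simp: I_curl_def)

definition coeffU :: "nat \<Rightarrow> (nat \<times> nat \<Rightarrow> real) \<Rightarrow> (nat \<times> nat \<Rightarrow> real) \<Rightarrow> nat \<times> nat \<Rightarrow> real" where
  "coeffU n a b = (\<lambda>(i, j). tau n j * sigma n i * a (i, j) + tau n i * b (i, j))"

definition coeffV :: "nat \<Rightarrow> (nat \<times> nat \<Rightarrow> real) \<Rightarrow> (nat \<times> nat \<Rightarrow> real) \<Rightarrow> nat \<times> nat \<Rightarrow> real" where
  "coeffV n a b = (\<lambda>(i, j). - tau n i * sigma n j * a (i, j) + tau n j * b (i, j))"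

(* Since tau n 0 = 0, the divergence-free blocks with j = 0 and the curl-free blocks with
   i = 0 vanish; hence only sine indices j >= 1 occur below. *)
lemma combU_entry:
  assumes "r < n" "c < n - 1"
  shows "combU n a b $$ (r, c)
       = (\<Sum>(i, j)\<in>{..<n} \<times> {1..<n}. coeffU n a b (i, j) * (cvec n i $ r * svec n j $ c))"
proof -
  have "(\<Sum>p\<in>I_div n. a p * U_div n (fst p) (snd p) $$ (r, c))
      = (\<Sum>(i, j)\<in>{..<n} \<times> {1..<n}. tau n j * sigma n i * a (i, j) * (cvec n i $ r * svec n j $ c))"
  proof (rule sum.mono_neutral_cong_right)
    show "finite (I_div n)" using assms by (simp add: I_div_eq)
    show "{..<n} \<times> {1..<n} \<subseteq> I_div n" by (auto simp: I_div_def)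
    show "\<forall>p\<in>I_div n - {..<n} \<times> {1..<n}. a p * U_div n (fst p) (snd p) $$ (r, c) = 0"
    proof
      fix p assume "p \<in> I_div n - {..<n} \<times> {1..<n}"
      then have "snd p = 0" using assms by (auto simp: I_div_def)
      then show "a p * U_div n (fst p) (snd p) $$ (r, c) = 0" using assms by (simp add: U_div_def)
    qed
  qed (use assms in \<open>auto simp: U_div_def\<close>)
  moreover have "(\<Sum>p\<in>I_curl n. b p * U_curl n (fst p) (snd p) $$ (r, c))
      = (\<Sum>(i, j)\<in>{..<n} \<times> {1..<n}. tau n i * b (i, j) * (cvec n i $ r * svec n j $ c))"
  proof (rule sum.mono_neutral_cong_left)
    show "I_curl n \<subseteq> {..<n} \<times> {1..<n}" by (auto simp: I_curl_def)
  qed (use assms tau_neq_0_imp_ge_1 in \<open>auto simp: I_curl_def U_curl_def\<close>)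
  ultimately show ?thesis
    using assms by (simp add: combU_def coeffU_def split_def sum.distrib[symmetric] distrib_right)
qed

lemma combV_entry:
  assumes "r < n - 1" "c < n"
  shows "combV n a b $$ (r, c)
       = (\<Sum>(i, j)\<in>{1..<n} \<times> {..<n}. coeffV n a b (i, j) * (svec n i $ r * cvec n j $ c))"
proof -
  have "(\<Sum>p\<in>I_div n. a p * V_div n (fst p) (snd p) $$ (r, c))
      = (\<Sum>(i, j)\<in>{1..<n} \<times> {..<n}. - tau n i * sigma n j * a (i, j) * (svec n i $ r * cvec n j $ c))"
  proof (rule sum.mono_neutral_cong_right)
    show "finite (I_div n)" using assms by (simp add: I_div_eq)
    show "{1..<n} \<times> {..<n} \<subseteq> I_div n" by (auto simp: I_div_def)
    show "\<forall>p\<in>I_div n - {1..<n} \<times> {..<n}. a p * V_div n (fst p) (snd p) $$ (r, c) = 0"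
    proof
      fix p assume "p \<in> I_div n - {1..<n} \<times> {..<n}"
      then have "fst p = 0" using assms by (auto simp: I_div_def)
      then show "a p * V_div n (fst p) (snd p) $$ (r, c) = 0" using assms by (simp add: V_div_def)
    qed
  qed (use assms in \<open>auto simp: V_div_def\<close>)
  moreover have "(\<Sum>p\<in>I_curl n. b p * V_curl n (fst p) (snd p) $$ (r, c))
      = (\<Sum>(i, j)\<in>{1..<n} \<times> {..<n}. tau n j * b (i, j) * (svec n i $ r * cvec n j $ c))"
  proof (rule sum.mono_neutral_cong_left)
    show "I_curl n \<subseteq> {1..<n} \<times> {..<n}" by (auto simp: I_curl_def)
  qed (use assms tau_neq_0_imp_ge_1 in \<open>auto simp: I_curl_def V_curl_def\<close>)
  ultimately show ?thesis
    using assms by (simp add: combV_def coeffV_def split_def sum.distrib[symmetric] distrib_right left_diff_distrib)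
qed

lemma linear_2x2_iff:
  fixes a b c d :: "'a::field"
  defines "\<Delta> \<equiv> a * d - b * c"
  assumes "\<Delta> \<noteq> 0"
  shows "(a * x + b * y = p \<and> c * x + d * y = q) \<longleftrightarrow>
         x = (d * p - b * q) / \<Delta> \<and> y = (a * q - c * p) / \<Delta>"
proof
  assume "a * x + b * y = p \<and> c * x + d * y = q"
  then have "p = a * x + b * y" "q = c * x + d * y" by simp_all
  then show "x = (d * p - b * q) / \<Delta> \<and> y = (a * q - c * p) / \<Delta>"
    using assms by (simp add: field_simps)
next
  assume "x = (d * p - b * q) / \<Delta> \<and> y = (a * q - c * p) / \<Delta>"
  then have x: "x * \<Delta> = d * p - b * q" and y: "y * \<Delta> = a * q - c * p"
    using assms by simp_all
  have "(a * x + b * y) * \<Delta> = a * (x * \<Delta>) + b * (y * \<Delta>)"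
   and "(c * x + d * y) * \<Delta> = c * (x * \<Delta>) + d * (y * \<Delta>)"
    by (simp_all add: algebra_simps)
  then have "(a * x + b * y) * \<Delta> = p * \<Delta>" "(c * x + d * y) * \<Delta> = q * \<Delta>"
    unfolding x y by (simp_all add: \<Delta>_def algebra_simps)
  then show "a * x + b * y = p \<and> c * x + d * y = q"
    using assms by simp
qed

definition mode_det :: "nat \<Rightarrow> nat \<Rightarrow> nat \<Rightarrow> real" where
  "mode_det n i j = (tau n j)\<^sup>2 * sigma n i + (tau n i)\<^sup>2 * sigma n j"

lemma mode_det_pos:
  assumes "0 < j" "j < n"
  shows "0 < mode_det n i j"
proof -
  have "0 < (tau n j)\<^sup>2 * sigma n i"
    using assms tau_neq_0[of j n] sigma_pos[of n i] by simp
  moreover have "0 \<le> (tau n i)\<^sup>2 * sigma n j"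
    using sigma_pos[of n j] by simp
  ultimately show ?thesis by (simp add: mode_det_def)
qed

lemma coeffs_eq_iff:
  assumes "0 < j" "j < n"
  shows "(coeffU n a b (i, j) = P \<and> coeffV n a b (i, j) = Q) \<longleftrightarrow>
         a (i, j) = (tau n j * P - tau n i * Q) / mode_det n i j \<and>
         b (i, j) = (tau n j * sigma n i * Q + tau n i * sigma n j * P) / mode_det n i j"
proof -
  have "tau n j * sigma n i * tau n j - tau n i * (- tau n i * sigma n j) = mode_det n i j"
    by (simp add: mode_det_def power2_eq_square)
  then show ?thesis
    using linear_2x2_iff[where a = "tau n j * sigma n i" and b = "tau n i" and c = "- tau n i * sigma n j"
        and d = "tau n j" and x = "a (i, j)" and y = "b (i, j)" and p = P and q = Q]
      mode_det_pos[OF assms, of i]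
    by (simp add: coeffU_def coeffV_def algebra_simps)
qed

lemma coeffs_eq_zero_imp_zero:
  assumes U: "\<forall>p\<in>{..<n} \<times> {1..<n}. coeffU n a b p = 0"
    and V: "\<forall>p\<in>{1..<n} \<times> {..<n}. coeffV n a b p = 0"
  shows "(\<forall>p\<in>I_div n. a p = 0) \<and> (\<forall>p\<in>I_curl n. b p = 0)"
proof -
  have inner: "a (i, j) = 0 \<and> b (i, j) = 0" if "0 < i" "i < n" "0 < j" "j < n" for i j
    using coeffs_eq_iff[of j n a b i 0 0] U V that by simp
  have edge_U: "a (0, j) = 0" if "0 < j" "j < n" for j
    using bspec[OF U, of "(0, j)"] that tau_neq_0[of j n] sigma_pos[of n 0] by (simp add: coeffU_def)
  have edge_V: "a (i, 0) = 0" if "0 < i" "i < n" for i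
    using bspec[OF V, of "(i, 0)"] that tau_neq_0[of i n] sigma_pos[of n 0] by (simp add: coeffV_def)
  show ?thesis
  proof safe
    fix i j assume "(i, j) \<in> I_div n"
    then show "a (i, j) = 0"
      using inner edge_U edge_V by (cases "i = 0"; cases "j = 0") (auto simp: I_div_def)
  next
    fix i j assume "(i, j) \<in> I_curl n"
    then show "b (i, j) = 0"
      using inner by (auto simp: I_curl_def)
  qed
qed

lemma coeffs_surj:
  "\<exists>a b. (\<forall>p\<in>{..<n} \<times> {1..<n}. coeffU n a b p = P p) \<and> (\<forall>p\<in>{1..<n} \<times> {..<n}. coeffV n a b p = Q p)"
proof -
  define a where "a = (\<lambda>(i, j).
      if i = 0 then P (i, j) / (tau n j * sigma n i)
      else if j = 0 then Q (i, j) / (- tau n i * sigma n j)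
      else (tau n j * P (i, j) - tau n i * Q (i, j)) / mode_det n i j)"
  define b where "b = (\<lambda>(i, j).
      (tau n j * sigma n i * Q (i, j) + tau n i * sigma n j * P (i, j)) / mode_det n i j)"
  have inner: "coeffU n a b (i, j) = P (i, j) \<and> coeffV n a b (i, j) = Q (i, j)"
    if "0 < i" "i < n" "0 < j" "j < n" for i j
    using coeffs_eq_iff[of j n a b i "P (i, j)" "Q (i, j)"] that by (simp add: a_def b_def)
  have "coeffU n a b (i, j) = P (i, j)" if "i < n" "0 < j" "j < n" for i j
  proof (cases "i = 0")
    case True
    then show ?thesis
      using that tau_neq_0[of j n] sigma_pos[of n 0] by (simp add: coeffU_def a_def)
  qed (use inner that in auto)
  moreover have "coeffV n a b (i, j) = Q (i, j)" if "0 < i" "i < n" "j < n" for i j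
  proof (cases "j = 0")
    case True
    then show ?thesis
      using that tau_neq_0[of i n] sigma_pos[of n 0] by (simp add: coeffV_def a_def)
  qed (use inner that in auto)
  ultimately have "(\<forall>p\<in>{..<n} \<times> {1..<n}. coeffU n a b p = P p) \<and> (\<forall>p\<in>{1..<n} \<times> {..<n}. coeffV n a b p = Q p)"
    by auto
  then show ?thesis by blast
qed

lemma combU_coeff:
  assumes "i \<in> {..<n}" "j \<in> {1..<n}"
  shows "real n / 2 * (real n / 2) * coeffU n a b (i, j)
       = (\<Sum>r<n. \<Sum>c<n - 1. combU n a b $$ (r, c) * (cvec n i $ r * svec n j $ c))"
proof -
  have "(\<Sum>r<n. \<Sum>c<n - 1. combU n a b $$ (r, c) * (cvec n i $ r * svec n j $ c))
      = (\<Sum>r<n. \<Sum>c<n - 1. (\<Sum>(i', j')\<in>{..<n} \<times> {1..<n}.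
          coeffU n a b (i', j') * (cvec n i' $ r * svec n j' $ c)) * (cvec n i $ r * svec n j $ c))"
    by (intro sum.cong refl) (simp add: combU_entry)
  also have "\<dots> = real n / 2 * (real n / 2) * coeffU n a b (i, j)"
    by (rule tensor_coeff[where u = "\<lambda>i r. cvec n i $ r" and v = "\<lambda>j c. svec n j $ c"])
      (rule cvec_orthogonal svec_orthogonal assms | simp)+
  finally show ?thesis ..
qed

lemma combV_coeff:
  assumes "i \<in> {1..<n}" "j \<in> {..<n}"
  shows "real n / 2 * (real n / 2) * coeffV n a b (i, j)
       = (\<Sum>r<n - 1. \<Sum>c<n. combV n a b $$ (r, c) * (svec n i $ r * cvec n j $ c))"
proof -
  have "(\<Sum>r<n - 1. \<Sum>c<n. combV n a b $$ (r, c) * (svec n i $ r * cvec n j $ c))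
      = (\<Sum>r<n - 1. \<Sum>c<n. (\<Sum>(i', j')\<in>{1..<n} \<times> {..<n}.
          coeffV n a b (i', j') * (svec n i' $ r * cvec n j' $ c)) * (svec n i $ r * cvec n j $ c))"
    by (intro sum.cong refl) (simp add: combV_entry)
  also have "\<dots> = real n / 2 * (real n / 2) * coeffV n a b (i, j)"
    by (rule tensor_coeff[where u = "\<lambda>i r. svec n i $ r" and v = "\<lambda>j c. cvec n j $ c"])
      (rule cvec_orthogonal svec_orthogonal assms | simp)+
  finally show ?thesis ..
qed

lemma combUV_eq_zero_imp_zero:
  assumes "combU n a b = 0\<^sub>m n (n - 1)" "combV n a b = 0\<^sub>m (n - 1) n"
  shows "(\<forall>p\<in>I_div n. a p = 0) \<and> (\<forall>p\<in>I_curl n. b p = 0)"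
proof (rule coeffs_eq_zero_imp_zero)
  show "\<forall>p\<in>{..<n} \<times> {1..<n}. coeffU n a b p = 0"
    using assms combU_coeff[of _ n _ a b] by fastforce
  show "\<forall>p\<in>{1..<n} \<times> {..<n}. coeffV n a b p = 0"
    using assms combV_coeff[of _ n _ a b] by fastforce
qed

lemma combU_eq_if_coeffU:
  assumes X: "X \<in> carrier_mat n (n - 1)"
    and coeff: "\<forall>(i, j)\<in>{..<n} \<times> {1..<n}. real n / 2 * (real n / 2) * coeffU n a b (i, j)
                  = (\<Sum>r<n. \<Sum>c<n - 1. X $$ (r, c) * (cvec n i $ r * svec n j $ c))"
  shows "X = combU n a b"
proof (rule eq_matI)
  fix r c assume "r < dim_row (combU n a b)" "c < dim_col (combU n a b)"
  then have rc: "r \<in> {..<n}" "c \<in> {..<n - 1}" by (simp_all add: combU_def)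
  define k where "k = real n / 2 * (real n / 2)"
  have "k * combU n a b $$ (r, c) = (\<Sum>(i, j)\<in>{..<n} \<times> {1..<n}.
      (\<Sum>r'<n. \<Sum>c'<n - 1. X $$ (r', c') * (cvec n i $ r' * svec n j $ c')) * (cvec n i $ r * svec n j $ c))"
    using rc coeff unfolding k_def
    by (auto simp: combU_entry sum_distrib_left mult.assoc[symmetric] intro!: sum.cong)
  also have "\<dots> = k * X $$ (r, c)"
    unfolding k_def by (rule tensor_expansion[where X = "\<lambda>r c. X $$ (r, c)"])
      (rule cvec_complete svec_complete rc | simp)+
  finally show "X $$ (r, c) = combU n a b $$ (r, c)"
    using rc by (simp add: k_def)
qed (use X in \<open>simp_all add: combU_def\<close>)

lemma combV_eq_if_coeffV:
  assumes Y: "Y \<in> carrier_mat (n - 1) n"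
    and coeff: "\<forall>(i, j)\<in>{1..<n} \<times> {..<n}. real n / 2 * (real n / 2) * coeffV n a b (i, j)
                  = (\<Sum>r<n - 1. \<Sum>c<n. Y $$ (r, c) * (svec n i $ r * cvec n j $ c))"
  shows "Y = combV n a b"
proof (rule eq_matI)
  fix r c assume "r < dim_row (combV n a b)" "c < dim_col (combV n a b)"
  then have rc: "r \<in> {..<n - 1}" "c \<in> {..<n}" by (simp_all add: combV_def)
  define k where "k = real n / 2 * (real n / 2)"
  have "k * combV n a b $$ (r, c) = (\<Sum>(i, j)\<in>{1..<n} \<times> {..<n}.
      (\<Sum>r'<n - 1. \<Sum>c'<n. Y $$ (r', c') * (svec n i $ r' * cvec n j $ c')) * (svec n i $ r * cvec n j $ c))"
    using rc coeff unfolding k_def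
    by (auto simp: combV_entry sum_distrib_left mult.assoc[symmetric] intro!: sum.cong)
  also have "\<dots> = k * Y $$ (r, c)"
    unfolding k_def by (rule tensor_expansion[where X = "\<lambda>r c. Y $$ (r, c)"])
      (rule cvec_complete svec_complete rc | simp)+
  finally show "Y $$ (r, c) = combV n a b $$ (r, c)"
    using rc by (simp add: k_def)
qed (use Y in \<open>simp_all add: combV_def\<close>)

lemma combUV_surj:
  assumes "X \<in> carrier_mat n (n - 1)" "Y \<in> carrier_mat (n - 1) n"
  shows "\<exists>a b. X = combU n a b \<and> Y = combV n a b"
proof -
  define k where "k = real n / 2 * (real n / 2)"
  obtain a b where
    "\<forall>p\<in>{..<n} \<times> {1..<n}. coeffU n a b p
       = (\<lambda>(i, j). (\<Sum>r<n. \<Sum>c<n - 1. X $$ (r, c) * (cvec n i $ r * svec n j $ c)) / k) p"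
    "\<forall>p\<in>{1..<n} \<times> {..<n}. coeffV n a b p
       = (\<lambda>(i, j). (\<Sum>r<n - 1. \<Sum>c<n. Y $$ (r, c) * (svec n i $ r * cvec n j $ c)) / k) p"
    using coeffs_surj by blast
  moreover have "k \<noteq> 0" if "0 < n" using that by (simp add: k_def)
  ultimately have "X = combU n a b" "Y = combV n a b"
    using assms by (auto intro!: combU_eq_if_coeffU combV_eq_if_coeffV simp: k_def)
  then show ?thesis by blast
qed

theorem theorem3p1:
  fixes n :: nat
  assumes "n \<ge> 2"
  shows
    "(\<forall>(i, j)\<in>I_div n.
        is_eigsol n (lam_div n i j) (U_div n i j) (V_div n i j) \<and>
        Bmat n * U_div n i j * Dmat n + Dmat n * V_div n i j * (Bmat n)\<^sup>T
          = 0\<^sub>m (n - 1) (n - 1))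
   \<and> (\<forall>(i, j)\<in>I_curl n. is_eigsol n 0 (U_curl n i j) (V_curl n i j))
   \<and> card (I_div n) = n\<^sup>2 - 1
   \<and> card (I_curl n) = (n - 1)\<^sup>2
   \<and> (\<forall>a b. combU n a b = 0\<^sub>m n (n - 1) \<and> combV n a b = 0\<^sub>m (n - 1) n \<longrightarrow>
          (\<forall>p\<in>I_div n. a p = 0) \<and> (\<forall>p\<in>I_curl n. b p = 0))
   \<and> (\<forall>X \<in> carrier_mat n (n - 1). \<forall>Y \<in> carrier_mat (n - 1) n.
          \<exists>a b. X = combU n a b \<and> Y = combV n a b)"
proof -
  have "card (I_div n) = n\<^sup>2 - 1"
    using assms by (simp add: I_div_eq card_Diff_singleton power2_eq_square)
  moreover have "card (I_curl n) = (n - 1)\<^sup>2"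
    by (simp add: I_curl_eq power2_eq_square)
  ultimately show ?thesis
    using div_mode_is_eigsol div_mode_div_free curl_mode_is_eigsol combUV_eq_zero_imp_zero combUV_surj
    by blast
qed

end
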